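(* Let $q$ be an odd prime power, $m>1$ an odd integer, $\omega$ a primitive element of $\mathbb{F}_{q^m}$, $k=\frac{m-1}{2}$, and let $A$, $H_1,\dots,H_k$, $a_1,\dots,a_k$, $b$ and $B$ be as defined in the context below. Then for every integer $a$, $$\psi(\omega^aB)=\begin{cases}q^{\frac{m-1}{2}}\frac{-1+G_q(\eta')}{2},&\text{if } \mathrm{Tr}_{q^m/q}(\omega^ab)\in C_0^{(2,q)} \text{ and } \omega^a\in(H_1\cap\dots\cap H_k)\setminus A,\\ q^{\frac{m-1}{2}}\frac{-1-G_q(\eta')}{2},&\text{if } \mathrm{Tr}_{q^m/q}(\omega^ab)\in C_1^{(2,q)} \text{ and } \omega^a\in(H_1\cap\dots\cap H_k)\setminus A,\\ \frac{q^{\frac{m-1}{2}}(q-1)}{2},&\text{if } \omega^a\in A\cap H_1\cap\dots\cap H_k,\\ 0,&\text{otherwise.}\end{cases}$$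
   Context: $\psi$ is the canonical additive character $\psi(x)=e^{2\pi i\,\mathrm{Tr}_{q^m/p}(x)/p}$ of $\mathbb{F}_{q^m}$ ($p$ the characteristic), $\psi(S)=\sum_{x\in S}\psi(x)$. $\eta'$ is the quadratic character of $\mathbb{F}_q$ and $G_q(\eta')=\sum_{x\in\mathbb{F}_q^\ast}\eta'(x)e^{2\pi i\,\mathrm{Tr}_{q/p}(x)/p}$. $C_0^{(2,q)}$ and $C_1^{(2,q)}$ are the nonzero squares and the nonsquares of $\mathbb{F}_q$. $A=\{x\in\mathbb{F}_{q^m}^\ast:\mathrm{Tr}_{q^m/q}(x^2)=0\}$. Choose $a_1\in A$ and, for $2\le\ell\le k$, $a_\ell\in A\cap H_1\cap\dots\cap H_{\ell-1}$, with $a_1,\dots,a_k$ linearly independent over $\mathbb{F}_q$, where $H_\ell=\{x\in\mathbb{F}_{q^m}^\ast:\mathrm{Tr}_{q^m/q}(xa_\ell)=0\}$. Fix $b\in(H_1\cap\dots\cap H_k)\setminus A$, and let $B=\{a_1x_1+\dots+a_kx_k+by: x_1,\dots,x_k\in\mathbb{F}_q,\ y\in C_0^{(2,q)}\}$. *)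

theory Defs
  imports Complex_Main "HOL-Computational_Algebra.Primes"
begin

definition field_trace :: "nat \<Rightarrow> nat \<Rightarrow> 'a::field \<Rightarrow> 'a" where
  "field_trace r n x = (\<Sum>i<n. x ^ (r ^ i))"

text \<open>Canonical additive character of F_{p^n} (p the characteristic):
  x |-> exp(2 pi i Tr_{p^n/p}(x)/p), where Tr(x) lies in the prime field,
  identified with {0..p-1}.\<close>
definition canon_char :: "nat \<Rightarrow> nat \<Rightarrow> 'a::field \<Rightarrow> complex" where
  "canon_char p n x =
     cis (2 * pi * real (THE j. j < p \<and> of_nat j = field_trace p n x) / real p)"

definition subfield_q :: "nat \<Rightarrow> 'a::field set" where
  "subfield_q q = {x. x ^ q = x}"

definition C0 :: "nat \<Rightarrow> 'a::field set" where
  "C0 q = {x \<in> subfield_q q. x \<noteq> 0 \<and> (\<exists>y\<in>subfield_q q. y ^ 2 = x)}"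

definition C1 :: "nat \<Rightarrow> 'a::field set" where
  "C1 q = (subfield_q q - {0}) - C0 q"

definition quad_char :: "nat \<Rightarrow> 'a::field \<Rightarrow> complex" where
  "quad_char q x = (if x \<in> C0 q then 1 else if x \<in> C1 q then -1 else 0)"

definition gauss_quad :: "nat \<Rightarrow> nat \<Rightarrow> 'a::field itself \<Rightarrow> complex" where
  "gauss_quad p e _ = (\<Sum>x\<in>subfield_q (p ^ e) - {0::'a}. quad_char (p ^ e) x * canon_char p e x)"

definition Aset :: "nat \<Rightarrow> nat \<Rightarrow> 'a::field set" where
  "Aset q m = {x. x \<noteq> 0 \<and> field_trace q m (x ^ 2) = 0}"

definition Hset :: "nat \<Rightarrow> nat \<Rightarrow> 'a::field \<Rightarrow> 'a set" where
  "Hset q m c = {x. x \<noteq> 0 \<and> field_trace q m (x * c) = 0}"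

end

theory Submission
  imports Defs "HOL-Library.FuncSet" "HOL-Library.Real_Mod" "HOL-Computational_Algebra.Polynomial"
begin

text \<open>
  Write c = \<omega>^t and Tr = Tr_{q^m/q}; the canonical character of F_{q^m} is \<psi> \<circ> Tr with
  \<psi> the canonical character of F_q. The map (x, y) \<mapsto> z = \<Sum> a_i x_i + b y is injective on
  F_q^k \<times> F_q, because Tr(z b) = y Tr(b^2) with Tr(b^2) \<noteq> 0 and the a_i are independent.
  Hence the character sum over cB factors into a sum over x \<in> F_q^k, which is q^k or 0
  according as c is or is not Tr-orthogonal to all a_i, times the sum of \<psi>(y Tr(cb)) over
  the nonzero squares y, which is (q - 1)/2 or (-1 \<plusminus> G_q(\<eta>'))/2 according as Tr(cb) is zero,
  a square or a nonsquare. Counting with characters, the orthogonal complement of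
  a_1, ..., a_k has q^(m-k) = q^(k+1) elements; it contains the span of a_1, ..., a_k, b,
  hence equals it. For c = \<Sum> a_i x_i + b y in it, Tr(c^2) = y^2 Tr(b^2) and
  Tr(cb) = y Tr(b^2), so c \<in> A exactly when Tr(cb) = 0.
\<close>

lemma character_sum_eq_0:
  fixes \<chi> :: "'b::ab_group_add \<Rightarrow> complex"
  assumes S: "finite S" and closed: "\<And>x y. x \<in> S \<Longrightarrow> y \<in> S \<Longrightarrow> x + y \<in> S"
    and z: "z \<in> S" and hom: "\<And>x. x \<in> S \<Longrightarrow> \<chi> (x + z) = \<chi> x * \<chi> z"
    and nontrivial: "\<chi> z \<noteq> 1"
  shows "(\<Sum>x\<in>S. \<chi> x) = 0"
proof -
  have inj: "inj_on (\<lambda>x. x + z) S" by (auto intro: inj_onI)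
  have "(\<lambda>x. x + z) ` S = S"
    by (rule endo_inj_surj[OF S _ inj]) (use closed z in auto)
  then have "(\<Sum>x\<in>S. \<chi> x) = (\<Sum>x\<in>S. \<chi> (x + z))"
    using sum.reindex[OF inj, of \<chi>] by simp
  also have "\<dots> = \<chi> z * (\<Sum>x\<in>S. \<chi> x)" by (simp add: hom sum_distrib_left mult.commute)
  finally have "(1 - \<chi> z) * (\<Sum>x\<in>S. \<chi> x) = 0" by (simp add: algebra_simps)
  then show ?thesis using nontrivial by simp
qed

lemma cis_2pi_mod:
  assumes "p > 0"
  shows "cis (2 * pi * real j / real p) = cis (2 * pi * real (j mod p) / real p)"
proof -
  have "real j = real p * real (j div p) + real (j mod p)"
    by (metis of_nat_add of_nat_mult div_mult_mod_eq mult.commute)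
  then have "2 * pi * real j / real p = 2 * pi * real (j div p) + 2 * pi * real (j mod p) / real p"
    using assms by (simp add: field_simps)
  then show ?thesis
    by (simp add: cis_mult[symmetric] cis_multiple_2pi)
qed

lemma card_fixed_points_power_le:
  assumes "n > 1"
  shows "card {x::'a::idom. x ^ n = x} \<le> n"
proof -
  define P where "P = monom (1::'a) n + [:0, -1:]"
  have deg: "degree P = n" unfolding P_def using assms
    by (subst degree_add_eq_left) (auto simp: degree_monom_eq)
  then have "P \<noteq> 0" using assms by auto
  moreover have "{x::'a. x ^ n = x} = {x. poly P x = 0}"
    unfolding P_def by (auto simp: poly_monom)
  ultimately show ?thesis using card_poly_roots_bound[of P] deg by simp
qed

lemma card_field_trace_eq_0_le:
  assumes "r > 1" and "n \<ge> 1"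
  shows "card {x::'a::field. field_trace r n x = 0} \<le> r ^ (n - 1)"
proof -
  define P where "P = (\<Sum>i<n. monom (1::'a) (r ^ i))"
  have "coeff P (r ^ (n - 1)) = (\<Sum>i<n. if i = n - 1 then 1 else 0)"
    unfolding P_def coeff_sum
    by (intro sum.cong) (use assms in \<open>auto simp: coeff_monom power_inject_exp\<close>)
  then have lead: "coeff P (r ^ (n - 1)) = 1" using assms by simp
  have "degree P \<le> r ^ (n - 1)"
    unfolding P_def
    by (intro degree_sum_le) (use assms in \<open>auto simp: degree_monom_eq intro: power_increasing\<close>)
  then have deg: "degree P = r ^ (n - 1)"
    using lead by (metis le_antisym le_degree one_neq_zero)
  have "P \<noteq> 0" using lead by auto
  moreover have "{x::'a. field_trace r n x = 0} = {x. poly P x = 0}"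
    unfolding P_def field_trace_def by (auto simp: poly_sum poly_monom)
  ultimately show ?thesis using card_poly_roots_bound[of P] deg by simp
qed

lemma power_card_eq_self:
  fixes x :: "'a::{finite,field}"
  shows "x ^ card (UNIV :: 'a set) = x"
proof (cases "x = 0")
  case True
  then show ?thesis using finite_UNIV_card_ge_0[where 'a='a] by simp
next
  case False
  define N where "N = card (UNIV :: 'a set) - 1"
  have N: "card (UNIV :: 'a set) = Suc N"
    using finite_UNIV_card_ge_0[where 'a='a] N_def by simp
  have "(\<Prod>y\<in>UNIV-{0}. x * y) = (\<Prod>y\<in>UNIV-{0::'a}. y)"
    by (rule prod.reindex_bij_witness[of _ "\<lambda>y. y / x" "\<lambda>y. x * y"]) (use False in auto)
  moreover have "card (UNIV - {0::'a}) = N" using N by (simp add: card_Diff_singleton)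
  ultimately have "x ^ N * (\<Prod>y\<in>UNIV-{0::'a}. y) = (\<Prod>y\<in>UNIV-{0::'a}. y)"
    by (simp add: prod.distrib)
  then have "x ^ N = 1" by simp
  then show ?thesis using N by simp
qed

lemma diff_1_dvd_power_diff_1: "(q::nat) \<ge> 1 \<Longrightarrow> (q - 1) dvd (q ^ n - 1)"
proof (induction n)
  case (Suc n)
  have "q ^ n \<ge> 1" using Suc.prems by simp
  then have "q ^ Suc n - 1 = q * (q ^ n - 1) + (q - 1)"
    using Suc.prems by (simp add: algebra_simps diff_mult_distrib2)
  then show ?case by (metis Suc dvd_add dvd_mult dvd_refl)
qed simp

lemma zero_notin_C0: "0 \<notin> C0 q"
  by (simp add: C0_def)

lemma zero_notin_C1: "0 \<notin> C1 q"
  by (simp add: C1_def)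

lemma C0_notin_C1: "x \<in> C0 q \<Longrightarrow> x \<notin> C1 q"
  by (simp add: C1_def)

lemma quad_char_C0: "x \<in> C0 q \<Longrightarrow> quad_char q x = 1"
  by (simp add: quad_char_def)

lemma quad_char_C1: "x \<in> C1 q \<Longrightarrow> quad_char q x = -1"
  by (simp add: quad_char_def C1_def)

section \<open>The canonical additive character in characteristic p\<close>

definition trace_index :: "nat \<Rightarrow> nat \<Rightarrow> 'a::field \<Rightarrow> nat" where
  "trace_index p n x = (THE j. j < p \<and> of_nat j = field_trace p n x)"

lemma canon_char_eq_cis: "canon_char p n x = cis (2 * pi * real (trace_index p n x) / real p)"
  unfolding canon_char_def trace_index_def ..

locale finite_field_char =
  fixes p :: nat
  assumes prime_p: "prime p" and of_nat_p: "of_nat p = (0::'a::{finite,field})"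
begin

lemma CHAR_eq_p: "CHAR('a) = p"
proof -
  have "CHAR('a) dvd p" using of_nat_p by (simp add: of_nat_eq_0_iff_char_dvd)
  moreover have "CHAR('a) \<noteq> 1" by simp
  ultimately show ?thesis using prime_p by (meson prime_nat_iff)
qed

lemma p_gt_1: "p > 1" using prime_p prime_gt_1_nat by blast

lemma frobenius_add: "(x + y :: 'a) ^ (p ^ n) = x ^ (p ^ n) + y ^ (p ^ n)"
  by (rule freshmans_dream') (auto simp: CHAR_eq_p prime_p)

lemma frobenius_sum: "(sum (f :: 'b \<Rightarrow> 'a) A) ^ (p ^ n) = (\<Sum>i\<in>A. f i ^ (p ^ n))"
  by (rule freshmans_dream_sum') (auto simp: CHAR_eq_p prime_p)

lemma frobenius_uminus: "(- x :: 'a) ^ (p ^ n) = - (x ^ (p ^ n))"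
proof -
  have "x ^ (p ^ n) + (- x) ^ (p ^ n) = 0" using frobenius_add[of x "- x" n] p_gt_1 by (simp add: power_0_left)
  then show ?thesis by (simp add: add_eq_0_iff)
qed

lemma frobenius_diff: "(x - y :: 'a) ^ (p ^ n) = x ^ (p ^ n) - y ^ (p ^ n)"
  using frobenius_add[of x "- y" n] frobenius_uminus[of y n] by simp

lemma of_nat_eq_0_iff_dvd: "(of_nat n :: 'a) = 0 \<longleftrightarrow> p dvd n"
  using of_nat_eq_0_iff_char_dvd[where 'a='a] CHAR_eq_p by simp

lemma of_nat_mod_char: "(of_nat n :: 'a) = of_nat (n mod p)"
proof -
  have "(of_nat n :: 'a) = of_nat (p * (n div p)) + of_nat (n mod p)"
    by (metis div_mult_mod_eq mult.commute of_nat_add)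
  then show ?thesis using of_nat_p by simp
qed

lemma of_nat_below_char_eq_iff:
  assumes "i < p" and "j < p"
  shows "(of_nat i :: 'a) = of_nat j \<longleftrightarrow> i = j"
proof -
  have "(of_nat i :: 'a) \<noteq> of_nat j" if "i < j" "j < p" for i j
    using that of_nat_eq_iff_char_dvd[where 'a='a, of i j] by (simp add: CHAR_eq_p nat_dvd_not_less)
  then show ?thesis using assms by (metis linorder_neqE_nat)
qed

lemma of_nat_power_char: "(of_nat j :: 'a) ^ p = of_nat j"
proof (induction j)
  case (Suc j)
  then show ?case
    using frobenius_add[of "of_nat j" 1 1] by (simp add: add.commute)
qed (use p_gt_1 in simp)

lemma prime_subfield_eq: "{x::'a. x ^ p = x} = of_nat ` {..<p}"
proof -
  have sub: "of_nat ` {..<p} \<subseteq> {x::'a. x ^ p = x}" using of_nat_power_char by auto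
  have "inj_on (of_nat :: nat \<Rightarrow> 'a) {..<p}"
    by (intro inj_onI) (simp add: of_nat_below_char_eq_iff)
  then have "card (of_nat ` {..<p} :: 'a set) = p"
    by (simp add: card_image)
  then have "of_nat ` {..<p} = {x::'a. x ^ p = x}"
    by (intro card_seteq[OF _ sub]) (simp_all add: card_fixed_points_power_le[OF p_gt_1])
  then show ?thesis ..
qed

lemma field_trace_add:
  "r = p ^ j \<Longrightarrow> field_trace r n (x + y) = field_trace r n x + field_trace r n (y::'a)"
  unfolding field_trace_def by (simp add: frobenius_add sum.distrib flip: power_mult)

lemma field_trace_power_eq:
  assumes r: "r = p ^ j" and x: "(x::'a) ^ (r ^ n) = x"
  shows "(field_trace r n x) ^ r = field_trace r n x"
proof -
  define f where "f i = x ^ (r ^ i)" for i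
  have "(field_trace r n x) ^ r = (\<Sum>i<n. f (Suc i))"
    unfolding field_trace_def r f_def by (simp add: frobenius_sum mult.commute flip: power_mult)
  also have "\<dots> = (\<Sum>i<n. f i) + f n - f 0"
    using sum.lessThan_Suc_shift[of f n] sum.lessThan_Suc[of f n] by (simp add: algebra_simps)
  also have "f n = f 0" using x by (simp add: f_def)
  finally show ?thesis by (simp add: field_trace_def f_def)
qed

lemma trace_index_spec:
  assumes "(x::'a) ^ (p ^ n) = x"
  shows "trace_index p n x < p" and "of_nat (trace_index p n x) = field_trace p n x"
proof -
  have "(field_trace p n x) ^ p = field_trace p n x"
    using field_trace_power_eq[of p 1 x n] assms by simp
  then have "field_trace p n x \<in> of_nat ` {..<p}"
    by (simp flip: prime_subfield_eq)
  then obtain j where j: "j < p" "of_nat j = field_trace p n x"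
    by auto
  have "trace_index p n x = j" unfolding trace_index_def
    by (rule the_equality) (metis j of_nat_below_char_eq_iff)+
  then show "trace_index p n x < p" "of_nat (trace_index p n x) = field_trace p n x"
    using j by auto
qed

lemma trace_index_unique:
  assumes "(x::'a) ^ (p ^ n) = x" and "j < p" and "of_nat j = field_trace p n x"
  shows "trace_index p n x = j"
  using trace_index_spec[OF assms(1)] assms by (metis of_nat_below_char_eq_iff)

lemma canon_char_add:
  assumes x: "(x::'a) ^ (p ^ n) = x" and y: "y ^ (p ^ n) = y"
  shows "canon_char p n (x + y) = canon_char p n x * canon_char p n y"
proof -
  have xy: "(x + y) ^ (p ^ n) = x + y" using x y frobenius_add by simp
  have "of_nat ((trace_index p n x + trace_index p n y) mod p) = field_trace p n (x + y)"
    using trace_index_spec(2)[OF x] trace_index_spec(2)[OF y] field_trace_add[of p 1 n x y]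
    by (simp flip: of_nat_mod_char)
  then have "trace_index p n (x + y) = (trace_index p n x + trace_index p n y) mod p"
    using trace_index_unique[OF xy] p_gt_1 by simp
  then show ?thesis
    unfolding canon_char_eq_cis using p_gt_1
    by (simp add: cis_mult flip: cis_2pi_mod add_divide_distrib distrib_left)
qed

lemma canon_char_0: "canon_char p n (0::'a) = 1"
proof -
  have "trace_index p n (0::'a) = 0"
    by (rule trace_index_unique) (use p_gt_1 in \<open>auto simp: field_trace_def power_0_left\<close>)
  then show ?thesis unfolding canon_char_eq_cis by simp
qed

lemma canon_char_neq_1:
  assumes x: "(x::'a) ^ (p ^ n) = x" and trace: "field_trace p n x \<noteq> 0"
  shows "canon_char p n x \<noteq> 1"
proof
  assume "canon_char p n x = 1"
  then obtain z :: int where z: "2 * pi * real (trace_index p n x) / real p = of_int z * (2 * pi)"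
    unfolding canon_char_eq_cis cis_eq_1_iff by blast
  have "trace_index p n x \<noteq> 0" using trace_index_spec(2)[OF x] trace by (metis of_nat_0)
  moreover have "trace_index p n x < p" using trace_index_spec(1)[OF x] .
  moreover from z have "real (trace_index p n x) = of_int z * real p"
    using p_gt_1 by (simp add: field_simps)
  then have "int (trace_index p n x) = z * int p"
    by (metis of_int_eq_iff of_int_mult of_int_of_nat_eq)
  ultimately show False
    by (metis dvd_triv_right int_dvd_int_iff nat_dvd_not_less not_gr0 of_nat_0_less_iff)
qed

lemma prod_canon_char:
  assumes "finite I" and "\<And>i. i \<in> I \<Longrightarrow> (f i :: 'a) ^ (p ^ n) = f i"
  shows "(\<Prod>i\<in>I. canon_char p n (f i)) = canon_char p n (sum f I)"
  using assms
proof (induction I rule: finite_induct)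
  case (insert i I)
  then have "(sum f I) ^ (p ^ n) = sum f I" by (simp add: frobenius_sum)
  then show ?case using insert by (simp add: canon_char_add)
qed (simp add: canon_char_0)

lemma sum_canon_char_eq_0:
  assumes "finite K" and "\<And>x y. x \<in> K \<Longrightarrow> y \<in> K \<Longrightarrow> x + y \<in> K"
    and "\<And>x. x \<in> K \<Longrightarrow> (x::'a) ^ (p ^ n) = x" and "n \<ge> 1" and "card K > p ^ (n - 1)"
  shows "(\<Sum>x\<in>K. canon_char p n x) = 0"
proof -
  have "card {x::'a. field_trace p n x = 0} < card K"
    using card_field_trace_eq_0_le[OF p_gt_1 \<open>n \<ge> 1\<close>, where 'a='a] assms(5) by linarith
  then have "\<not> K \<subseteq> {x. field_trace p n x = 0}"
    using card_mono[of "{x::'a. field_trace p n x = 0}" K]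
    by (meson finite_class.finite_UNIV finite_subset leD subset_UNIV)
  then obtain z where z: "z \<in> K" and trace: "field_trace p n z \<noteq> 0" by blast
  show ?thesis
  proof (rule character_sum_eq_0[OF assms(1,2) z])
    show "canon_char p n (x + z) = canon_char p n x * canon_char p n z" if "x \<in> K" for x
      using that z assms(3) by (simp add: canon_char_add)
    show "canon_char p n z \<noteq> 1"
      using canon_char_neq_1[OF assms(3)[OF z] trace] .
  qed
qed

end

section \<open>The extension F_{q^m} / F_q\<close>

locale extension_field = finite_field_char p for p +
  fixes e q m :: nat and \<omega> :: "'a::{finite,field}"
  assumes odd_p: "odd p" and e_ge_1: "e \<ge> 1" and q_def: "q = p ^ e"
    and card_UNIV: "card (UNIV :: 'a set) = q ^ m" and m_gt_1: "m > 1"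
    and \<omega>_neq_0: "\<omega> \<noteq> 0" and \<omega>_primitive: "\<forall>x::'a. x \<noteq> 0 \<longrightarrow> (\<exists>n. x = \<omega> ^ n)"

context extension_field
begin

abbreviation F :: "'a set" where "F \<equiv> subfield_q q"
abbreviation Tr :: "'a \<Rightarrow> 'a" where "Tr \<equiv> field_trace q m"
text \<open>\<Psi> is the paper's character \<psi> of F_{q^m}; \<psi> is the canonical character of F = F_q.\<close>
abbreviation \<psi> :: "'a \<Rightarrow> complex" where "\<psi> \<equiv> canon_char p e"
abbreviation \<Psi> :: "'a \<Rightarrow> complex" where "\<Psi> \<equiv> canon_char p (e * m)"

lemma q_gt_1: "q > 1"
proof -
  have "0 < e" using e_ge_1 by simp
  then show ?thesis using one_less_power[OF p_gt_1] q_def by simp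
qed

lemma q_power: "q ^ l = p ^ (e * l)"
  using q_def by (simp add: power_mult)

lemma power_p_power_em: "(x::'a) ^ (p ^ (e * m)) = x"
  using power_card_eq_self[of x] card_UNIV by (simp add: q_power)

lemma in_subfield_iff: "x \<in> F \<longleftrightarrow> x ^ q = x"
  by (simp add: subfield_q_def)

lemma subfield_power_q_power: "x \<in> F \<Longrightarrow> x ^ (q ^ l) = x"
proof (induction l)
  case (Suc l)
  then have "x ^ (q ^ Suc l) = (x ^ q) ^ (q ^ l)"
    by (simp add: mult.commute flip: power_mult)
  then show ?case using Suc by (simp add: in_subfield_iff)
qed simp

lemma subfield_0: "0 \<in> F"
  using q_gt_1 by (simp add: in_subfield_iff)

lemma subfield_add: "x \<in> F \<Longrightarrow> y \<in> F \<Longrightarrow> x + y \<in> F"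
  using frobenius_add[of x y e] by (simp add: in_subfield_iff flip: q_def)

lemma subfield_diff: "x \<in> F \<Longrightarrow> y \<in> F \<Longrightarrow> x - y \<in> F"
  using frobenius_diff[of x y e] by (simp add: in_subfield_iff flip: q_def)

lemma subfield_uminus: "x \<in> F \<Longrightarrow> - x \<in> F"
  using frobenius_uminus[of x e] by (simp add: in_subfield_iff flip: q_def)

lemma subfield_mult: "x \<in> F \<Longrightarrow> y \<in> F \<Longrightarrow> x * y \<in> F"
  by (simp add: in_subfield_iff power_mult_distrib)

lemma subfield_divide: "x \<in> F \<Longrightarrow> y \<in> F \<Longrightarrow> x / y \<in> F"
  by (simp add: in_subfield_iff power_divide)

lemma power_\<omega>_order: "\<omega> ^ (q ^ m - 1) = 1"
proof -
  have "q ^ m = Suc (q ^ m - 1)" using q_gt_1 by simp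
  then have "\<omega> * \<omega> ^ (q ^ m - 1) = \<omega> * 1"
    using power_card_eq_self[of \<omega>] card_UNIV by (metis mult_1_right power_Suc)
  then show ?thesis using \<omega>_neq_0 by simp
qed

lemma power_\<omega>_neq_1:
  assumes "0 < s" and "s < q ^ m - 1"
  shows "\<omega> ^ s \<noteq> 1"
proof
  assume \<omega>s: "\<omega> ^ s = 1"
  have "UNIV - {0} \<subseteq> (\<lambda>n. \<omega> ^ n) ` {..<s}"
  proof
    fix x :: 'a assume "x \<in> UNIV - {0}"
    then obtain n where "x = \<omega> ^ n" using \<omega>_primitive by auto
    also have "\<omega> ^ n = \<omega> ^ (s * (n div s) + n mod s)" by simp
    also have "\<dots> = (\<omega> ^ s) ^ (n div s) * \<omega> ^ (n mod s)" by (simp only: power_add power_mult)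
    finally show "x \<in> (\<lambda>n. \<omega> ^ n) ` {..<s}" using \<omega>s assms by auto
  qed
  then have "card (UNIV - {0::'a}) \<le> card ((\<lambda>n. \<omega> ^ n) ` {..<s})"
    by (intro card_mono) auto
  also have "\<dots> \<le> s"
    using card_image_le[of "{..<s}" "\<lambda>n. \<omega> ^ n"] by simp
  finally have "card (UNIV - {0::'a}) \<le> s" .
  then show False using assms card_UNIV by (simp add: card_Diff_singleton)
qed

lemma power_\<omega>_eq_iff:
  assumes "i < q ^ m - 1" and "j < q ^ m - 1"
  shows "\<omega> ^ i = \<omega> ^ j \<longleftrightarrow> i = j"
proof -
  have "\<omega> ^ i \<noteq> \<omega> ^ j" if "i < j" "j < q ^ m - 1" for i j
  proof
    assume "\<omega> ^ i = \<omega> ^ j"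
    also have "\<omega> ^ j = \<omega> ^ i * \<omega> ^ (j - i)" using \<open>i < j\<close> by (simp flip: power_add)
    finally have "\<omega> ^ (j - i) = 1" using \<omega>_neq_0 by simp
    then show False using power_\<omega>_neq_1[of "j - i"] that by simp
  qed
  then show ?thesis using assms by (metis linorder_neqE_nat)
qed

text \<open>F consists of 0 and the q - 1 distinct powers of \<omega>^d, where d = (q^m - 1) / (q - 1).\<close>
lemma card_subfield: "card F = q"
proof -
  obtain d where d: "q ^ m - 1 = (q - 1) * d"
    using diff_1_dvd_power_diff_1[of q m] q_gt_1 by (auto elim!: dvdE)
  have in_F: "(\<omega> ^ d) ^ j \<in> F" for j
  proof -
    have "((\<omega> ^ d) ^ j) ^ (q - 1) = (\<omega> ^ (q ^ m - 1)) ^ j"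
      unfolding d by (simp add: ac_simps flip: power_mult)
    then have "((\<omega> ^ d) ^ j) ^ (q - 1 + 1) = (\<omega> ^ d) ^ j"
      using power_\<omega>_order by (simp only: power_add) simp
    then show ?thesis using q_gt_1 by (simp add: in_subfield_iff)
  qed
  have "inj_on (\<lambda>j. (\<omega> ^ d) ^ j) {..<q - 1}"
  proof (rule inj_onI)
    fix i j assume i: "i \<in> {..<q - 1}" and j: "j \<in> {..<q - 1}"
      and eq: "(\<omega> ^ d) ^ i = (\<omega> ^ d) ^ j"
    have "1 < q ^ m" using one_less_power[OF q_gt_1] m_gt_1 by simp
    then have "0 < d" using d by (cases d) simp_all
    then have "d * i < q ^ m - 1" and "d * j < q ^ m - 1"
      unfolding d using i j by (simp_all add: mult.commute)
    moreover have "\<omega> ^ (d * i) = \<omega> ^ (d * j)" using eq by (simp add: power_mult)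
    ultimately show "i = j" using power_\<omega>_eq_iff \<open>0 < d\<close> by simp
  qed
  then have "card (insert 0 ((\<lambda>j. (\<omega> ^ d) ^ j) ` {..<q - 1})) = q"
    using \<omega>_neq_0 q_gt_1 by (subst card_insert_disjoint) (auto simp: card_image)
  moreover have "insert 0 ((\<lambda>j. (\<omega> ^ d) ^ j) ` {..<q - 1}) \<subseteq> F"
    using in_F subfield_0 by auto
  ultimately have "q \<le> card F" by (metis card_mono finite)
  moreover have "card F \<le> q"
    using card_fixed_points_power_le[OF q_gt_1] by (simp add: subfield_q_def)
  ultimately show ?thesis by simp
qed

lemma sum_canon_char_subfield: "(\<Sum>x\<in>F. \<psi> x) = 0"
proof (rule sum_canon_char_eq_0)
  show "x ^ (p ^ e) = x" if "x \<in> F" for x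
    using that by (simp add: in_subfield_iff flip: q_def)
  show "p ^ (e - 1) < card F"
    using card_subfield q_def e_ge_1 p_gt_1 by (simp add: power_strict_increasing)
qed (use e_ge_1 subfield_add in auto)

lemma sum_canon_char_UNIV: "(\<Sum>x\<in>UNIV. \<Psi> x) = 0"
  using card_UNIV q_power e_ge_1 m_gt_1 p_gt_1
  by (intro sum_canon_char_eq_0) (auto simp: power_p_power_em)

lemma sum_canon_char_subfield_mult:
  assumes "\<tau> \<in> F"
  shows "(\<Sum>d\<in>F. \<psi> (d * \<tau>)) = (if \<tau> = 0 then of_nat q else 0)"
proof (cases "\<tau> = 0")
  case True
  then show ?thesis by (simp add: canon_char_0 card_subfield)
next
  case False
  then have inj: "inj_on (\<lambda>d. d * \<tau>) F" by (auto intro: inj_onI)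
  moreover have "(\<lambda>d. d * \<tau>) ` F = F"
    by (rule endo_inj_surj[OF _ _ inj]) (use assms subfield_mult in auto)
  ultimately show ?thesis
    using sum_canon_char_subfield False sum.reindex[OF inj, of \<psi>] by simp
qed

lemma sum_canon_char_mult:
  assumes "s \<noteq> 0"
  shows "(\<Sum>x\<in>UNIV. \<Psi> (x * s)) = 0"
proof -
  have inj: "inj (\<lambda>x. x * s)" using assms by (auto intro: inj_onI)
  then have "range (\<lambda>x. x * s) = UNIV" using finite_UNIV_inj_surj[OF _ inj] by simp
  then show ?thesis using sum_canon_char_UNIV sum.reindex[OF inj, of \<Psi>] by simp
qed

lemma rel_trace_add: "Tr (x + y) = Tr x + Tr y"
  using field_trace_add[OF q_def] .

lemma rel_trace_sum: "Tr (sum f A) = (\<Sum>i\<in>A. Tr (f i))"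
  unfolding field_trace_def q_power by (simp add: frobenius_sum sum.swap[of _ A])

lemma rel_trace_scalar: "c \<in> F \<Longrightarrow> Tr (c * x) = c * Tr x"
  unfolding field_trace_def by (simp add: power_mult_distrib subfield_power_q_power sum_distrib_left)

lemma rel_trace_in_subfield: "Tr x \<in> F"
  using field_trace_power_eq[OF q_def, of x m] power_p_power_em
  by (simp add: in_subfield_iff q_power)

lemma field_trace_rel_trace: "field_trace p (e * m) x = field_trace p e (Tr x)"
proof -
  have "field_trace p e (Tr x) = (\<Sum>(j, l)\<in>{..<e} \<times> {..<m}. x ^ (p ^ (e * l + j)))"
    unfolding field_trace_def
    by (simp add: frobenius_sum sum.cartesian_product q_power power_add ac_simps flip: power_mult)
  also have "\<dots> = (\<Sum>i<e * m. x ^ (p ^ i))"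
  proof (rule sum.reindex_bij_witness[where i = "\<lambda>i. (i mod e, i div e)" and j = "\<lambda>(j, l). e * l + j"])
    have "e * l + j < e * m" if "j < e" "l < m" for j l
    proof -
      have "e * l + j < e * Suc l" using that by simp
      also have "\<dots> \<le> e * m" using that by (intro mult_le_mono2) simp
      finally show ?thesis .
    qed
    then show "(\<lambda>(j, l). e * l + j) jl \<in> {..<e * m}" if "jl \<in> {..<e} \<times> {..<m}" for jl
      using that by auto
  qed (use e_ge_1 in \<open>auto simp: less_mult_imp_div_less mult.commute\<close>)
  finally show ?thesis unfolding field_trace_def ..
qed

lemma canon_char_rel_trace: "\<Psi> x = \<psi> (Tr x)"
  unfolding canon_char_def field_trace_rel_trace ..

subsection \<open>Squares of F_q and the quadratic Gauss sum\<close>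

lemma two_neq_0: "(2::'a) \<noteq> 0"
proof
  assume "(2::'a) = 0"
  then have "p dvd 2" using of_nat_eq_0_iff_dvd[of 2] by simp
  then have "p \<le> 2" by (rule dvd_imp_le) simp
  then have "p = 2" using p_gt_1 by simp
  then show False using odd_p by simp
qed

lemma C0_subset: "C0 q \<subseteq> F - {0::'a}"
  unfolding C0_def by auto

lemma C1_eq: "C1 q = F - {0::'a} - C0 q"
  unfolding C1_def ..

lemma card_C0: "2 * card (C0 q :: 'a set) = q - 1"
proof -
  have squares: "(\<lambda>y. y ^ 2) ` (F - {0::'a}) = C0 q"
    unfolding C0_def by (auto intro: subfield_mult simp: power2_eq_square)
  have "card {x \<in> F - {0}. x ^ 2 = c} = 2" if c: "c \<in> C0 q" for c
  proof -
    obtain y where y: "y \<in> F" "y ^ 2 = c" "c \<noteq> 0" using c unfolding C0_def by blast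
    then have "y \<noteq> 0" by auto
    have "{x \<in> F - {0}. x ^ 2 = c} = {y, - y}"
    proof (intro equalityI subsetI)
      fix x assume "x \<in> {x \<in> F - {0}. x ^ 2 = c}"
      then have "(x - y) * (x + y) = 0" using y by (auto simp: algebra_simps power2_eq_square)
      then show "x \<in> {y, - y}" by (auto simp: eq_neg_iff_add_eq_0)
    qed (use y \<open>y \<noteq> 0\<close> subfield_uminus in auto)
    moreover have "y \<noteq> - y" using two_neq_0 \<open>y \<noteq> 0\<close> by (simp add: eq_neg_iff_add_eq_0 flip: mult_2)
    ultimately show ?thesis by simp
  qed
  then have "card (F - {0::'a}) = (\<Sum>c\<in>(C0 q :: 'a set). 2)"
    using sum.image_gen[of "F - {0::'a}" "\<lambda>_. 1::nat" "\<lambda>y. y ^ 2"] squares by simp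
  moreover have "card (F - {0::'a}) = q - 1" using card_subfield subfield_0 by simp
  ultimately show ?thesis by simp
qed

lemma card_C1: "card (C1 q :: 'a set) = card (C0 q :: 'a set)"
  using C0_subset card_C0 card_subfield subfield_0 by (simp add: C1_eq card_Diff_subset)


lemma image_mult_C0:
  assumes "(\<tau>::'a) \<in> C0 q"
  shows "(\<lambda>y. y * \<tau>) ` C0 q = C0 q"
proof (rule card_subset_eq)
  show "(\<lambda>y. y * \<tau>) ` C0 q \<subseteq> C0 q"
  proof
    fix z assume "z \<in> (\<lambda>y. y * \<tau>) ` C0 q"
    then obtain y where y: "y \<in> C0 q" and z: "z = y * \<tau>" by auto
    obtain u v where u: "u \<in> F" "u ^ 2 = \<tau>" and v: "v \<in> F" "v ^ 2 = y"
      using y assms unfolding C0_def by blast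
    have "z \<in> F" "z \<noteq> 0" using y assms C0_subset subfield_mult z by auto
    moreover have "v * u \<in> F" "(v * u) ^ 2 = z" using u v z subfield_mult by (auto simp: power_mult_distrib)
    ultimately show "z \<in> C0 q" unfolding C0_def by blast
  qed
  have "\<tau> \<noteq> 0" using assms C0_subset by blast
  then have "inj_on (\<lambda>y. y * \<tau>) (C0 q)" by (intro inj_onI) simp
  then show "card ((\<lambda>y. y * \<tau>) ` C0 q) = card (C0 q :: 'a set)" by (rule card_image)
qed simp

lemma image_mult_C1:
  assumes "(\<tau>::'a) \<in> C1 q"
  shows "(\<lambda>y. y * \<tau>) ` C0 q = C1 q"
proof (rule card_subset_eq)
  show "(\<lambda>y. y * \<tau>) ` C0 q \<subseteq> C1 q"
  proof
    fix z assume "z \<in> (\<lambda>y. y * \<tau>) ` C0 q"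
    then obtain y where y: "y \<in> C0 q" and z: "z = y * \<tau>" by auto
    obtain v where v: "v \<in> F" "v ^ 2 = y" "y \<noteq> 0" using y unfolding C0_def by auto
    have \<tau>: "\<tau> \<in> F" "\<tau> \<noteq> 0" "\<tau> \<notin> C0 q" using assms by (auto simp: C1_eq)
    have "z \<notin> C0 q"
    proof
      assume "z \<in> C0 q"
      then obtain u where "u \<in> F" "u ^ 2 = z" unfolding C0_def by auto
      then have "u / v \<in> F" "(u / v) ^ 2 = \<tau>"
        using v z by (auto simp: subfield_divide power_divide)
      then show False using \<tau> unfolding C0_def by auto
    qed
    then show "z \<in> C1 q"
      using y \<tau> C0_subset z by (auto simp: C1_eq intro: subfield_mult)
  qed
  have "inj_on (\<lambda>y. y * \<tau>) (C0 q)" using assms by (auto simp: C1_eq intro: inj_onI)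
  then show "card ((\<lambda>y. y * \<tau>) ` C0 q) = card (C1 q :: 'a set)" by (simp add: card_image card_C1)
qed simp

lemma sum_canon_char_C0_C1:
  "(\<Sum>x\<in>C0 q. \<psi> x) = (-1 + gauss_quad p e TYPE('a)) / 2"
  "(\<Sum>x\<in>C1 q. \<psi> x) = (-1 - gauss_quad p e TYPE('a)) / 2"
proof -
  have split: "F - {0} = C0 q \<union> C1 q" "C0 q \<inter> C1 q = ({} :: 'a set)"
    using C0_subset unfolding C1_def by auto
  have "(\<Sum>x\<in>F. \<psi> x) = \<psi> 0 + (\<Sum>x\<in>F - {0::'a}. \<psi> x)"
    using subfield_0 by (simp add: sum.remove)
  then have "(\<Sum>x\<in>C0 q. \<psi> x) + (\<Sum>x\<in>C1 q. \<psi> x) = -1"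
    using sum_canon_char_subfield canon_char_0 split sum.union_disjoint[of "C0 q" "C1 q" \<psi>]
    by (simp add: eq_neg_iff_add_eq_0 add.commute)
  moreover have "gauss_quad p e TYPE('a) = (\<Sum>x\<in>C0 q. \<psi> x) - (\<Sum>x\<in>C1 q. \<psi> x)"
  proof -
    have "gauss_quad p e TYPE('a) = (\<Sum>x\<in>C0 q \<union> C1 q. quad_char q x * \<psi> x)"
      unfolding gauss_quad_def q_def[symmetric] split(1) ..
    also have "\<dots> = (\<Sum>x\<in>C0 q. quad_char q x * \<psi> x) + (\<Sum>x\<in>C1 q. quad_char q x * \<psi> x)"
      using split(2) by (simp add: sum.union_disjoint)
    also have "\<dots> = (\<Sum>x\<in>C0 q. \<psi> x) - (\<Sum>x\<in>C1 q. \<psi> x)"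
      by (simp add: quad_char_C0 quad_char_C1 sum_negf)
    finally show ?thesis .
  qed
  ultimately have "2 * (\<Sum>x\<in>C0 q. \<psi> x) = -1 + gauss_quad p e TYPE('a)"
    and "2 * (\<Sum>x\<in>C1 q. \<psi> x) = -1 - gauss_quad p e TYPE('a)"
    by algebra+
  then show "(\<Sum>x\<in>C0 q. \<psi> x) = (-1 + gauss_quad p e TYPE('a)) / 2"
    and "(\<Sum>x\<in>C1 q. \<psi> x) = (-1 - gauss_quad p e TYPE('a)) / 2"
    by (simp_all add: field_simps)
qed

lemma sum_canon_char_C0_mult:
  assumes "\<tau> \<in> F"
  shows "(\<Sum>y\<in>C0 q. \<psi> (y * \<tau>)) =
    (if \<tau> = 0 then (of_nat q - 1) / 2
     else if \<tau> \<in> C0 q then (-1 + gauss_quad p e TYPE('a)) / 2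
     else (-1 - gauss_quad p e TYPE('a)) / 2)"
proof (cases "\<tau> = 0")
  case True
  have "2 * (of_nat (card (C0 q :: 'a set)) :: complex) = of_nat q - 1"
    using card_C0 q_gt_1 by (metis of_nat_1 of_nat_diff of_nat_mult of_nat_numeral less_imp_le)
  then show ?thesis using True canon_char_0 by (simp add: field_simps)
next
  case False
  then have "inj_on (\<lambda>y. y * \<tau>) (C0 q)" by (auto intro: inj_onI)
  then have "(\<Sum>y\<in>C0 q. \<psi> (y * \<tau>)) = (\<Sum>x\<in>(\<lambda>y. y * \<tau>) ` C0 q. \<psi> x)"
    by (simp add: sum.reindex)
  moreover have "\<tau> \<in> C0 q \<or> \<tau> \<in> C1 q" using assms False by (auto simp: C1_eq)
  ultimately show ?thesis
    using False image_mult_C0 image_mult_C1 sum_canon_char_C0_C1 by (auto simp: C1_eq)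
qed

end

section \<open>Isotropic frames\<close>

locale isotropic_frame = extension_field p e q m \<omega>
  for p e q m :: nat and \<omega> :: "'a::{finite,field}" +
  fixes k :: nat and a :: "nat \<Rightarrow> 'a" and b :: 'a
  assumes m_odd: "odd m" and k_def: "k = (m - 1) div 2"
    and a_1: "a 1 \<in> Aset q m"
    and a_l: "\<forall>l\<in>{2..k}. a l \<in> Aset q m \<inter> (\<Inter>j\<in>{1..<l}. Hset q m (a j))"
    and a_independent: "\<forall>c :: nat \<Rightarrow> 'a. (\<forall>i\<in>{1..k}. c i \<in> subfield_q q)
            \<and> (\<Sum>i=1..k. c i * a i) = 0 \<longrightarrow> (\<forall>i\<in>{1..k}. c i = 0)"
    and b_mem: "b \<in> (\<Inter>j\<in>{1..k}. Hset q m (a j)) - Aset q m"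
begin

lemma m_eq: "m = 2 * k + 1"
  using m_odd k_def m_gt_1 by presburger

lemma k_ge_1: "k \<ge> 1"
  using m_odd m_gt_1 k_def by presburger

lemma rel_trace_frame:
  assumes i: "i \<in> {1..k}" and j: "j \<in> {1..k}"
  shows "Tr (a i * a j) = 0"
proof -
  have isotropic: "Tr (a l * a l) = 0" if "l \<in> {1..k}" for l
  proof -
    have "a l \<in> Aset q m"
    proof (cases "l = 1")
      case False
      then have "l \<in> {2..k}" using that by auto
      then show ?thesis using a_l by blast
    qed (use a_1 in simp)
    then show ?thesis by (simp add: Aset_def power2_eq_square)
  qed
  have orthogonal: "Tr (a l * a l') = 0" if "l' \<in> {1..k}" "l' < l" "l \<in> {1..k}" for l l'
  proof -
    have "a l \<in> Hset q m (a l')" using a_l that by auto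
    then show ?thesis by (simp add: Hset_def)
  qed
  consider "i = j" | "j < i" | "i < j" by linarith
  then show ?thesis
  proof cases
    case 1
    then show ?thesis using isotropic i by simp
  next
    case 2
    then show ?thesis using orthogonal i j by simp
  next
    case 3
    then show ?thesis using orthogonal[of i j] i j by (simp add: mult.commute)
  qed
qed

lemma b_neq_0: "b \<noteq> 0"
  using b_mem k_ge_1 by (auto simp: Hset_def)

lemma rel_trace_b_frame: "j \<in> {1..k} \<Longrightarrow> Tr (b * a j) = 0"
  using b_mem by (auto simp: Hset_def)

lemma rel_trace_b_b_neq_0: "Tr (b * b) \<noteq> 0"
  using b_mem b_neq_0 by (auto simp: Aset_def power2_eq_square)

definition comb :: "(nat \<Rightarrow> 'a) \<Rightarrow> 'a" where
  "comb x = (\<Sum>i=1..k. a i * x i)"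

abbreviation coeffs :: "(nat \<Rightarrow> 'a) set" where
  "coeffs \<equiv> PiE {1..k} (\<lambda>_. F)"

definition perp :: "'a set" where
  "perp = {x. \<forall>i\<in>{1..k}. Tr (x * a i) = 0}"

lemma rel_trace_comb_mult:
  assumes "x \<in> coeffs" and "y \<in> F"
  shows "Tr ((comb x + b * y) * c) = (\<Sum>i=1..k. x i * Tr (a i * c)) + y * Tr (b * c)"
proof -
  have "(comb x + b * y) * c = (\<Sum>i=1..k. x i * (a i * c)) + y * (b * c)"
    unfolding comb_def by (simp add: sum_distrib_left sum_distrib_right algebra_simps)
  moreover have "Tr (x i * (a i * c)) = x i * Tr (a i * c)" if "i \<in> {1..k}" for i
    using assms(1) that by (intro rel_trace_scalar) auto
  ultimately show ?thesis
    using assms(2) by (simp add: rel_trace_add rel_trace_sum rel_trace_scalar)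
qed

lemma rel_trace_comb_mult_b:
  assumes "x \<in> coeffs" and "y \<in> F"
  shows "Tr ((comb x + b * y) * b) = y * Tr (b * b)"
  using rel_trace_comb_mult[OF assms] rel_trace_b_frame by (simp add: mult.commute)

lemma comb_eq_0_iff:
  assumes "x \<in> coeffs"
  shows "comb x = 0 \<longleftrightarrow> x = (\<lambda>i\<in>{1..k}. 0)"
proof
  assume "comb x = 0"
  then have "\<forall>i\<in>{1..k}. x i = 0"
    using assms a_independent unfolding comb_def by (auto simp: mult.commute)
  then show "x = (\<lambda>i\<in>{1..k}. 0)"
    using assms by (auto intro!: PiE_ext)
qed (simp add: comb_def)

lemma inj_on_frame: "inj_on (\<lambda>(x, y). comb x + b * y) (coeffs \<times> F)"
proof (rule inj_onI)
  fix u v assume "u \<in> coeffs \<times> F" "v \<in> coeffs \<times> F"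
    and eq_uv: "(\<lambda>(x, y). comb x + b * y) u = (\<lambda>(x, y). comb x + b * y) v"
  then obtain x y x' y' where u: "u = (x, y)" and x: "x \<in> coeffs" and y: "y \<in> F"
    and v: "v = (x', y')" and x': "x' \<in> coeffs" and y': "y' \<in> F"
    by blast
  have eq: "comb x + b * y = comb x' + b * y'" using eq_uv u v by simp
  have "y * Tr (b * b) = y' * Tr (b * b)"
    by (metis eq rel_trace_comb_mult_b x y x' y')
  then have "y = y'" using rel_trace_b_b_neq_0 by simp
  with eq have "comb (\<lambda>i\<in>{1..k}. x i - x' i) = 0"
    unfolding comb_def by (simp add: sum_subtractf algebra_simps)
  moreover have "(\<lambda>i\<in>{1..k}. x i - x' i) \<in> coeffs" using x x' subfield_diff by auto
  ultimately have zero: "(\<lambda>i\<in>{1..k}. x i - x' i) = (\<lambda>i\<in>{1..k}. 0)"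
    using comb_eq_0_iff by simp
  have "x i = x' i" if "i \<in> {1..k}" for i
    using fun_cong[OF zero, of i] that by simp
  then have "x = x'" by (rule PiE_ext[OF x x'])
  then show "u = v" using u v \<open>y = y'\<close> by simp
qed

lemma sum_canon_char_comb:
  "(\<Sum>d\<in>coeffs. \<Psi> (c * comb d)) = (if c \<in> perp then of_nat q ^ k else 0)"
proof -
  have "(\<Sum>d\<in>coeffs. \<Psi> (c * comb d)) = (\<Sum>d\<in>coeffs. \<Prod>i\<in>{1..k}. \<psi> (d i * Tr (c * a i)))"
  proof (rule sum.cong[OF refl])
    fix d assume d: "d \<in> coeffs"
    have "\<Psi> (c * comb d) = (\<Prod>i\<in>{1..k}. \<Psi> (d i * (c * a i)))"
      unfolding comb_def sum_distrib_left
      by (subst prod_canon_char) (auto simp: power_p_power_em ac_simps)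
    also have "\<dots> = (\<Prod>i\<in>{1..k}. \<psi> (d i * Tr (c * a i)))"
    proof (rule prod.cong[OF refl])
      fix i assume "i \<in> {1..k}"
      then have "d i \<in> F" using d by auto
      then show "\<Psi> (d i * (c * a i)) = \<psi> (d i * Tr (c * a i))"
        by (simp add: canon_char_rel_trace rel_trace_scalar)
    qed
    finally show "\<Psi> (c * comb d) = (\<Prod>i\<in>{1..k}. \<psi> (d i * Tr (c * a i)))" .
  qed
  also have "\<dots> = (\<Prod>i\<in>{1..k}. \<Sum>d\<in>F. \<psi> (d * Tr (c * a i)))"
    by (rule prod_sum_PiE[symmetric]) auto
  also have "\<dots> = (\<Prod>i\<in>{1..k}. if Tr (c * a i) = 0 then of_nat q else 0)"
    by (intro prod.cong refl) (simp add: sum_canon_char_subfield_mult rel_trace_in_subfield)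
  also have "\<dots> = (if c \<in> perp then of_nat q ^ k else 0)"
    by (auto simp: perp_def)
  finally show ?thesis .
qed

lemma card_perp: "card perp = q ^ (k + 1)"
proof -
  have "(\<Sum>c\<in>UNIV. \<Sum>d\<in>coeffs. \<Psi> (c * comb d)) = of_nat (card perp) * of_nat q ^ k"
    by (simp only: sum_canon_char_comb) (simp add: sum.If_cases)
  moreover have "(\<Sum>c\<in>UNIV. \<Sum>d\<in>coeffs. \<Psi> (c * comb d)) = (\<Sum>d\<in>coeffs. \<Sum>c\<in>UNIV. \<Psi> (c * comb d))"
    by (rule sum.swap)
  moreover have "\<dots> = (\<Sum>d\<in>coeffs. if d = (\<lambda>i\<in>{1..k}. 0) then of_nat (q ^ m) else 0)"
    using comb_eq_0_iff
    by (intro sum.cong refl) (auto simp: sum_canon_char_mult canon_char_0 card_UNIV comb_def)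
  moreover have "\<dots> = of_nat (q ^ m)"
  proof -
    have "(\<lambda>i\<in>{1..k}. 0) \<in> coeffs" using subfield_0 by auto
    then show ?thesis by (simp add: sum.delta finite_PiE)
  qed
  ultimately have "of_nat (card perp * q ^ k) = (of_nat (q ^ m) :: complex)"
    by simp
  then have "card perp * q ^ k = q ^ m"
    by (simp only: of_nat_eq_iff)
  also have "\<dots> = q ^ (k + 1) * q ^ k"
    by (simp add: m_eq mult_2 flip: power_add)
  finally show ?thesis using q_gt_1 by simp
qed

lemma perp_eq_image: "perp = (\<lambda>(x, y). comb x + b * y) ` (coeffs \<times> F)"
proof (rule card_subset_eq[symmetric])
  show "(\<lambda>(x, y). comb x + b * y) ` (coeffs \<times> F) \<subseteq> perp"
    using rel_trace_comb_mult rel_trace_frame rel_trace_b_frame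
    by (auto simp: perp_def)
  have "card ((\<lambda>(x, y). comb x + b * y) ` (coeffs \<times> F)) = card (coeffs \<times> F)"
    by (rule card_image[OF inj_on_frame])
  also have "\<dots> = q ^ (k + 1)"
    by (simp add: card_cartesian_product card_PiE card_subfield)
  finally show "card ((\<lambda>(x, y). comb x + b * y) ` (coeffs \<times> F)) = card perp"
    by (simp add: card_perp)
qed simp

lemma isotropic_iff_rel_trace_b:
  assumes "c \<in> perp"
  shows "Tr (c * c) = 0 \<longleftrightarrow> Tr (c * b) = 0"
proof -
  obtain x y where x: "x \<in> coeffs" and y: "y \<in> F" and c: "c = comb x + b * y"
    using assms perp_eq_image by auto
  have "Tr (c * b) = y * Tr (b * b)"
    unfolding c by (rule rel_trace_comb_mult_b[OF x y])
  moreover have "Tr (c * c) = y * Tr (c * b)"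
    using rel_trace_comb_mult[OF x y, of c] assms unfolding c[symmetric]
    by (simp add: perp_def mult.commute)
  ultimately show ?thesis using rel_trace_b_b_neq_0 by simp
qed

lemma B_eq_image:
  assumes "B = {(\<Sum>i=1..k. a i * x i) + b * y | x y.
               (\<forall>i\<in>{1..k}. x i \<in> subfield_q q) \<and> y \<in> C0 q}"
  shows "B = (\<lambda>(x, y). comb x + b * y) ` (coeffs \<times> C0 q)"
proof (intro equalityI subsetI)
  fix z assume "z \<in> B"
  then obtain x y where x: "\<forall>i\<in>{1..k}. x i \<in> F" and y: "y \<in> C0 q"
    and z: "z = (\<Sum>i=1..k. a i * x i) + b * y"
    using assms by blast
  have "restrict x {1..k} \<in> coeffs" using x by simp
  moreover have "z = comb (restrict x {1..k}) + b * y"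
    unfolding z comb_def by (simp add: mult.commute)
  ultimately show "z \<in> (\<lambda>(x, y). comb x + b * y) ` (coeffs \<times> C0 q)"
    using y by (intro image_eqI[of _ _ "(restrict x {1..k}, y)"]) auto
next
  fix z assume "z \<in> (\<lambda>(x, y). comb x + b * y) ` (coeffs \<times> C0 q)"
  then obtain x y where x: "x \<in> coeffs" and y: "y \<in> C0 q" and z: "z = comb x + b * y"
    by (auto simp: image_iff)
  have "\<forall>i\<in>{1..k}. x i \<in> F" using x by auto
  moreover have "z = (\<Sum>i=1..k. a i * x i) + b * y" unfolding z comb_def ..
  ultimately show "z \<in> B" unfolding assms using y by blast
qed

lemma sum_canon_char_scaled_image:
  assumes "c \<noteq> 0"
  shows "(\<Sum>z\<in>(\<lambda>u. c * u) ` (\<lambda>(x, y). comb x + b * y) ` (coeffs \<times> C0 q). \<Psi> z) =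
    (if c \<in> perp then of_nat q ^ k else 0) * (\<Sum>y\<in>C0 q. \<psi> (y * Tr (c * b)))"
proof -
  have inj_c: "inj_on (\<lambda>u. c * u) A" for A using assms by (auto intro: inj_onI)
  have inj_frame: "inj_on (\<lambda>(x, y). comb x + b * y) (coeffs \<times> C0 q)"
    using C0_subset by (blast intro: inj_on_subset[OF inj_on_frame])
  have "(\<Sum>z\<in>(\<lambda>u. c * u) ` (\<lambda>(x, y). comb x + b * y) ` (coeffs \<times> C0 q). \<Psi> z) =
      (\<Sum>u\<in>coeffs \<times> C0 q. \<Psi> (c * (\<lambda>(x, y). comb x + b * y) u))"
    unfolding sum.reindex[OF inj_c] sum.reindex[OF inj_frame] comp_def ..
  also have "\<dots> = (\<Sum>(x, y)\<in>coeffs \<times> C0 q. \<Psi> (c * comb x) * \<Psi> (c * (b * y)))"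
    by (intro sum.cong refl) (auto simp: distrib_left canon_char_add power_p_power_em)
  also have "\<dots> = (\<Sum>x\<in>coeffs. \<Psi> (c * comb x)) * (\<Sum>y\<in>C0 q. \<Psi> (c * (b * y)))"
    by (simp add: sum_product sum.cartesian_product)
  also have "(\<Sum>y\<in>C0 q. \<Psi> (c * (b * y))) = (\<Sum>y\<in>C0 q. \<psi> (y * Tr (c * b)))"
  proof (rule sum.cong[OF refl])
    fix y :: 'a assume "y \<in> C0 q"
    then have "y \<in> F" using C0_subset by blast
    then show "\<Psi> (c * (b * y)) = \<psi> (y * Tr (c * b))"
      by (simp add: canon_char_rel_trace ac_simps flip: rel_trace_scalar)
  qed
  finally show ?thesis by (simp only: sum_canon_char_comb)
qed

lemma mem_Hset_iff_perp: "c \<noteq> 0 \<Longrightarrow> c \<in> (\<Inter>j\<in>{1..k}. Hset q m (a j)) \<longleftrightarrow> c \<in> perp"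
  using k_ge_1 by (auto simp: Hset_def perp_def)

lemma mem_Aset_iff: "c \<noteq> 0 \<Longrightarrow> c \<in> Aset q m \<longleftrightarrow> Tr (c * c) = 0"
  by (simp add: Aset_def power2_eq_square)

lemma sum_canon_char_scaled_B:
  assumes B: "B = {(\<Sum>i=1..k. a i * x i) + b * y | x y.
               (\<forall>i\<in>{1..k}. x i \<in> subfield_q q) \<and> y \<in> C0 q}"
    and c: "c \<noteq> 0"
  shows "(\<Sum>z\<in>(\<lambda>u. c * u) ` B. \<Psi> z) =
    (if Tr (c * b) \<in> C0 q \<and> c \<in> (\<Inter>j\<in>{1..k}. Hset q m (a j)) - Aset q m
     then of_nat q ^ k * ((-1 + gauss_quad p e TYPE('a)) / 2)
     else if Tr (c * b) \<in> C1 q \<and> c \<in> (\<Inter>j\<in>{1..k}. Hset q m (a j)) - Aset q m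
     then of_nat q ^ k * ((-1 - gauss_quad p e TYPE('a)) / 2)
     else if c \<in> Aset q m \<inter> (\<Inter>j\<in>{1..k}. Hset q m (a j))
     then of_nat q ^ k * (of_nat q - 1) / 2
     else 0)"
proof -
  have sum: "(\<Sum>z\<in>(\<lambda>u. c * u) ` B. \<Psi> z) = (if c \<in> perp then of_nat q ^ k else 0) *
     (if Tr (c * b) = 0 then (of_nat q - 1) / 2
      else if Tr (c * b) \<in> C0 q then (-1 + gauss_quad p e TYPE('a)) / 2
      else (-1 - gauss_quad p e TYPE('a)) / 2)"
    unfolding B_eq_image[OF B] sum_canon_char_scaled_image[OF c]
      sum_canon_char_C0_mult[OF rel_trace_in_subfield] ..
  have H: "c \<in> (\<Inter>j\<in>{1..k}. Hset q m (a j)) - Aset q m \<longleftrightarrow> c \<in> perp \<and> Tr (c * c) \<noteq> 0"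
    and A: "c \<in> Aset q m \<inter> (\<Inter>j\<in>{1..k}. Hset q m (a j)) \<longleftrightarrow> c \<in> perp \<and> Tr (c * c) = 0"
    using mem_Hset_iff_perp[OF c] mem_Aset_iff[OF c] by auto
  have "Tr (c * b) \<in> C0 q \<or> Tr (c * b) \<in> C1 q \<or> Tr (c * b) = 0"
    using rel_trace_in_subfield by (auto simp: C1_eq)
  then consider (non_perp) "c \<notin> perp"
    | (isotropic) "c \<in> perp" "Tr (c * b) = 0"
    | (square) "c \<in> perp" "Tr (c * b) \<in> C0 q"
    | (nonsquare) "c \<in> perp" "Tr (c * b) \<in> C1 q"
    by blast
  then show ?thesis
  proof cases
    case non_perp
    then show ?thesis unfolding H A sum by simp
  next
    case isotropic
    then show ?thesis unfolding H A sum
      using isotropic_iff_rel_trace_b[of c] zero_notin_C0 zero_notin_C1 by simp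
  next
    case square
    then show ?thesis unfolding H A sum
      using isotropic_iff_rel_trace_b[of c] zero_notin_C0 C0_notin_C1 by simp
  next
    case nonsquare
    then show ?thesis unfolding H A sum
      using isotropic_iff_rel_trace_b[of c] zero_notin_C1 C0_notin_C1 by auto
  qed
qed

end

theorem lemma7p6:
  fixes p e q m k :: nat and \<omega> b :: "'a::{finite,field}" and a :: "nat \<Rightarrow> 'a"
    and B :: "'a set" and t :: int
  assumes "prime p" and "odd p" and "e \<ge> 1" and "q = p ^ e"
    and "of_nat p = (0::'a)"
    and "card (UNIV :: 'a set) = q ^ m"
    and "m > 1" and "odd m"
    and "\<omega> \<noteq> 0" and "\<forall>x::'a. x \<noteq> 0 \<longrightarrow> (\<exists>n::nat. x = \<omega> ^ n)"
    and "k = (m - 1) div 2"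
    and "a 1 \<in> Aset q m"
    and "\<forall>l\<in>{2..k}. a l \<in> Aset q m \<inter> (\<Inter>j\<in>{1..<l}. Hset q m (a j))"
    and "\<forall>c :: nat \<Rightarrow> 'a. (\<forall>i\<in>{1..k}. c i \<in> subfield_q q)
            \<and> (\<Sum>i=1..k. c i * a i) = 0 \<longrightarrow> (\<forall>i\<in>{1..k}. c i = 0)"
    and "b \<in> (\<Inter>j\<in>{1..k}. Hset q m (a j)) - Aset q m"
    and "B = {(\<Sum>i=1..k. a i * x i) + b * y | x y.
               (\<forall>i\<in>{1..k}. x i \<in> subfield_q q) \<and> y \<in> C0 q}"
  shows "(\<Sum>z\<in>(\<lambda>u. \<omega> powi t * u) ` B. canon_char p (e * m) z) =
    (if field_trace q m (\<omega> powi t * b) \<in> C0 q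
        \<and> \<omega> powi t \<in> (\<Inter>j\<in>{1..k}. Hset q m (a j)) - Aset q m
     then of_nat q ^ k * ((-1 + gauss_quad p e TYPE('a)) / 2)
     else if field_trace q m (\<omega> powi t * b) \<in> C1 q
        \<and> \<omega> powi t \<in> (\<Inter>j\<in>{1..k}. Hset q m (a j)) - Aset q m
     then of_nat q ^ k * ((-1 - gauss_quad p e TYPE('a)) / 2)
     else if \<omega> powi t \<in> Aset q m \<inter> (\<Inter>j\<in>{1..k}. Hset q m (a j))
     then of_nat q ^ k * (of_nat q - 1) / 2
     else 0)"
proof -
  interpret isotropic_frame p e q m \<omega> k a b
    by unfold_locales (fact assms)+
  have "\<omega> powi t \<noteq> 0" using \<open>\<omega> \<noteq> 0\<close> by simp
  then show ?thesis by (rule sum_canon_char_scaled_B[OF \<open>B = _\<close>])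
qed

end
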